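(* Let $\alpha$ be irrational with continued fraction denominators $(q_n)_{n\ge1}$, fix $\delta_1>0$ and $0<c<(1/24)^2(1-e^{-\delta_1})$, and let $\delta\ge\delta'\ge\delta_1$. Let $A$ be either an interval of positive length in $\mathbb R/\mathbb Z$, or an annulus $A=B(\ell\alpha,e^{-\ell\delta'})\setminus B(\ell\alpha,ce^{-\ell\delta'})$ with $q_l/2\le\ell<q_l$ for some $l\ge1$. Suppose that for all sufficiently large $m$ a set of integers $\widetilde{\mathcal D}_m[A]\subset\{n:q_m/2\le n<q_m,\ n\alpha\in A\}$ is given with $\frac18|A|q_m\le\#\widetilde{\mathcal D}_m[A]\le|A|q_m$ (e.g. the sets provided by Propositions 3.4 and 3.5). Let $0<a<\min\{2^{-10},2^{-10}\delta\}$ and let $j\ge1$ be an integer with $\frac12\le j\cdot 2^9a\delta^{-1}\le1$. Then for all sufficiently large $k$ there exist subsets $\mathcal D_{k+2i}[A]\subset\widetilde{\mathcal D}_{k+2i}[A]$, $0\le i<j$, such that (i) the closed balls $B\big(n\alpha,\frac{a}{\delta n}\big)$, $n\in\bigcup_{0\le i<j}\mathcal D_{k+2i}[A]$, are pairwise disjoint; (ii) for each $0\le i<j$, $\#\mathcal D_{k+2i}[A]\ge\frac12\#\widetilde{\mathcal D}_{k+2i}[A]\ge\frac1{16}|A|\,q_{k+2i}$.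
   Context: Points are on the circle $\mathbb R/\mathbb Z$; $B(y,r)$ is the closed ball for $\|\cdot\|_{\mathbb R/\mathbb Z}$; $|\cdot|$ is Lebesgue measure; $q_n$ is the denominator of the $n$-th continued fraction convergent of $\alpha$. *)

theory Defs
  imports "HOL-Analysis.Analysis"
begin

fun cf_rem :: "real \<Rightarrow> nat \<Rightarrow> real" where
  "cf_rem x 0 = x"
| "cf_rem x (Suc n) = 1 / frac (cf_rem x n)"

definition cf_coeff :: "real \<Rightarrow> nat \<Rightarrow> nat" where
  "cf_coeff x n = nat \<lfloor>cf_rem x n\<rfloor>"

fun cf_denom :: "real \<Rightarrow> nat \<Rightarrow> nat" where
  "cf_denom x 0 = 1"
| "cf_denom x (Suc 0) = cf_coeff x 1"
| "cf_denom x (Suc (Suc n)) = cf_coeff x (Suc (Suc n)) * cf_denom x (Suc n) + cf_denom x n"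

section \<open>The circle R/Z, modelled by 1-periodic subsets of R\<close>

definition circ_norm :: "real \<Rightarrow> real" where
  "circ_norm x = \<bar>x - of_int (round x)\<bar>"

definition circ_ball :: "real \<Rightarrow> real \<Rightarrow> real set" where
  "circ_ball y r = {x. circ_norm (x - y) \<le> r}"

definition circ_measure :: "real set \<Rightarrow> real" where
  "circ_measure A = measure lebesgue (A \<inter> {0..<1})"

definition circ_proj :: "real set \<Rightarrow> real set" where
  "circ_proj I = {x. \<exists>k::int. x - of_int k \<in> I}"

definition circ_interval :: "real set \<Rightarrow> bool" where
  "circ_interval A \<longleftrightarrow> (\<exists>I. is_interval I \<and> bounded I \<and>
      0 < measure lebesgue I \<and> measure lebesgue I \<le> 1 \<and> A = circ_proj I)"

end

theory Submission
  imports Defs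
begin

(* By the best approximation property of continued fractions, distinct 0 \<le> n, n' < q_m
   satisfy ||(n - n') \<alpha>|| \<ge> 1/(2 q_m).  Writing \<rho> = a/\<delta>, the balls B(n\<alpha>, \<rho>/n) with n in one
   block [q_m/2, q_m) are therefore pairwise disjoint, and by a packing count one such ball meets
   at most 12 \<rho> q_m'/q_m balls of a block with q_m' \<ge> 2 q_m.  As q_(m+2) \<ge> 2 q_m, deleting from
   each level k + 2i every point whose ball meets a ball of an earlier level removes at most
   12 j \<rho> |A| q_(k+2i) \<le> |A| q_(k+2i)/16 points, i.e. at most half of the given set. *)

lemma circ_norm_le_abs_diff_of_int: "circ_norm x \<le> \<bar>x - of_int k\<bar>"
  unfolding circ_norm_def by (rule round_diff_minimal)

lemma circ_norm_minus: "circ_norm (- x) = circ_norm x"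
proof (rule antisym)
  show "circ_norm (- x) \<le> circ_norm x"
    using circ_norm_le_abs_diff_of_int[of "- x" "- round x"]
    by (simp add: circ_norm_def abs_minus_commute)
  show "circ_norm x \<le> circ_norm (- x)"
    using circ_norm_le_abs_diff_of_int[of x "- round (- x)"]
    by (simp add: circ_norm_def abs_minus_commute)
qed

lemma circ_norm_add_le: "circ_norm (x + y) \<le> circ_norm x + circ_norm y"
proof -
  have "circ_norm (x + y) \<le> \<bar>x + y - of_int (round x + round y)\<bar>"
    by (rule circ_norm_le_abs_diff_of_int)
  also have "\<dots> \<le> circ_norm x + circ_norm y"
    by (simp add: circ_norm_def)
  finally show ?thesis .
qed

lemma circ_norm_diff_le_add_radii:
  assumes "z \<in> circ_ball y r" "z \<in> circ_ball y' r'"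
  shows "circ_norm (y' - y) \<le> r + r'"
proof -
  have "circ_norm (y' - y) \<le> circ_norm (z - y) + circ_norm (- (z - y'))"
    using circ_norm_add_le[of "z - y" "- (z - y')"] by simp
  moreover have "circ_norm (y' - z) = circ_norm (z - y')"
    using circ_norm_minus[of "z - y'"] by simp
  ultimately show ?thesis
    using assms by (simp add: circ_ball_def)
qed

lemma card_mult_le_Max_of_separated:
  fixes X :: "real set"
  assumes "finite X" "X \<noteq> {}" "X \<subseteq> {lo..}"
    and "\<And>x y. x \<in> X \<Longrightarrow> y \<in> X \<Longrightarrow> x \<noteq> y \<Longrightarrow> g \<le> \<bar>x - y\<bar>"
  shows "real (card X) * g \<le> Max X - lo + g"
  using assms
proof (induction X rule: finite_linorder_max_induct)
  case (insert b X)
  show ?case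
  proof (cases "X = {}")
    case True
    then show ?thesis
      using insert.prems by simp
  next
    case False
    have "Max X \<in> X" "Max X < b"
      using insert.hyps False by auto
    then have "Max X \<le> b - g"
      using insert.prems(3)[of b "Max X"] by force
    moreover have "real (card X) * g \<le> Max X - lo + g"
      using insert.IH False insert.prems by blast
    moreover have "b \<notin> X"
      using insert.hyps(2) by blast
    ultimately show ?thesis
      using insert.hyps(1) False \<open>Max X < b\<close> by (simp add: algebra_simps)
  qed
qed simp

lemma card_mult_le_of_circ_separated:
  fixes T :: "real set"
  assumes "finite T" "c \<in> T" "0 < g"
    and near: "\<And>t. t \<in> T \<Longrightarrow> circ_norm (t - c) \<le> r"
    and sep: "\<And>s t. s \<in> T \<Longrightarrow> t \<in> T \<Longrightarrow> s \<noteq> t \<Longrightarrow> g \<le> circ_norm (s - t)"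
  shows "real (card T) * g \<le> 2 * r + g"
proof -
  define off where "off t = (t - c) - of_int (round (t - c))" for t
  have off_le: "- r \<le> off t" "off t \<le> r" if "t \<in> T" for t
    using near[OF that] by (simp_all add: off_def circ_norm_def abs_le_iff)
  have off_sep: "g \<le> \<bar>off s - off t\<bar>" if "s \<in> T" "t \<in> T" "s \<noteq> t" for s t
  proof -
    have "off s - off t = (s - t) - of_int (round (s - c) - round (t - c))"
      by (simp add: off_def)
    then show ?thesis
      using circ_norm_le_abs_diff_of_int[of "s - t" "round (s - c) - round (t - c)"] sep[OF that]
      by simp
  qed
  then have "inj_on off T"
    using \<open>0 < g\<close> by (intro inj_onI) force
  have "real (card (off ` T)) * g \<le> Max (off ` T) - - r + g"
    using \<open>finite T\<close> \<open>c \<in> T\<close> off_le off_sep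
    by (intro card_mult_le_Max_of_separated) auto
  moreover have "Max (off ` T) \<le> r"
    using \<open>finite T\<close> \<open>c \<in> T\<close> off_le by (subst Max_le_iff) auto
  ultimately show ?thesis
    using card_image[OF \<open>inj_on off T\<close>] by simp
qed

lemma cf_rem_not_rat: "x \<notin> \<rat> \<Longrightarrow> cf_rem x n \<notin> \<rat>"
proof (induction n)
  case (Suc n)
  have "frac (cf_rem x n) \<notin> \<rat>"
  proof
    assume "frac (cf_rem x n) \<in> \<rat>"
    then have "frac (cf_rem x n) + of_int \<lfloor>cf_rem x n\<rfloor> \<in> \<rat>"
      by simp
    then show False
      using Suc by (simp add: frac_def)
  qed
  then show ?case
    by (metis Rats_inverse cf_rem.simps(2) inverse_eq_divide inverse_inverse_eq)
qed simp

lemma frac_cf_rem_pos: "x \<notin> \<rat> \<Longrightarrow> 0 < frac (cf_rem x n)"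
  using cf_rem_not_rat[of x n] frac_eq_0_iff[of "cf_rem x n"] Ints_subset_Rats frac_ge_0
  by (metis less_eq_real_def subsetD)

lemma cf_rem_Suc_gt_1: "x \<notin> \<rat> \<Longrightarrow> 1 < cf_rem x (Suc n)"
  using frac_cf_rem_pos[of x n] frac_lt_1[of "cf_rem x n"] by simp

lemma cf_rem_eq_floor_add: "x \<notin> \<rat> \<Longrightarrow> cf_rem x n = of_int \<lfloor>cf_rem x n\<rfloor> + 1 / cf_rem x (Suc n)"
  using frac_cf_rem_pos[of x n] by (simp add: frac_def)

lemma of_nat_cf_coeff_Suc: "x \<notin> \<rat> \<Longrightarrow> real (cf_coeff x (Suc n)) = of_int \<lfloor>cf_rem x (Suc n)\<rfloor>"
  using cf_rem_Suc_gt_1[of x n] by (simp add: cf_coeff_def)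

lemma cf_coeff_Suc_ge_1: "x \<notin> \<rat> \<Longrightarrow> 1 \<le> cf_coeff x (Suc n)"
  using of_nat_cf_coeff_Suc[of x n] cf_rem_Suc_gt_1[of x n] by linarith

text \<open>Denominators and numerators of the convergents, shifted by one:
  conv_denom x (n + 1) = q_n and conv_num x (n + 1) = p_n, while
  index 0 holds the customary values q_(-1) = 0, p_(-1) = 1.\<close>

fun conv_denom :: "real \<Rightarrow> nat \<Rightarrow> nat" where
  "conv_denom x 0 = 0"
| "conv_denom x (Suc 0) = 1"
| "conv_denom x (Suc (Suc n)) = cf_coeff x (Suc n) * conv_denom x (Suc n) + conv_denom x n"

fun conv_num :: "real \<Rightarrow> nat \<Rightarrow> int" where
  "conv_num x 0 = 1"
| "conv_num x (Suc 0) = \<lfloor>x\<rfloor>"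
| "conv_num x (Suc (Suc n)) = int (cf_coeff x (Suc n)) * conv_num x (Suc n) + conv_num x n"

lemma conv_denom_Suc: "conv_denom x (Suc n) = cf_denom x n"
  by (induction x n rule: cf_denom.induct) auto

lemma conv_denom_le_Suc: "x \<notin> \<rat> \<Longrightarrow> conv_denom x n \<le> conv_denom x (Suc n)"
proof (cases n)
  case (Suc m)
  assume "x \<notin> \<rat>"
  then have "1 * conv_denom x (Suc m) \<le> cf_coeff x (Suc m) * conv_denom x (Suc m)"
    by (intro mult_le_mono1 cf_coeff_Suc_ge_1)
  then show ?thesis
    using Suc by (simp only: conv_denom.simps mult_1)
qed simp

lemma conv_denom_Suc_ge_1: "x \<notin> \<rat> \<Longrightarrow> 1 \<le> conv_denom x (Suc n)"
  using lift_Suc_mono_le[of "conv_denom x" 1 "Suc n"] conv_denom_le_Suc by simp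

lemma conv_num_denom_cf_rem:
  assumes "x \<notin> \<rat>"
  shows "x * (real (conv_denom x (Suc n)) * cf_rem x (Suc n) + real (conv_denom x n))
    = of_int (conv_num x (Suc n)) * cf_rem x (Suc n) + of_int (conv_num x n)"
proof (induction n)
  case 0
  have "frac x > 0"
    using frac_cf_rem_pos[OF assms, of 0] by simp
  then show ?case
    by (simp add: frac_def field_simps)
next
  case (Suc n)
  define r r' c where "r = cf_rem x (Suc n)" and "r' = cf_rem x (Suc (Suc n))"
    and "c = real (cf_coeff x (Suc n))"
  have r: "r = c + 1 / r'"
    unfolding r_def r'_def c_def
    using cf_rem_eq_floor_add[OF assms, of "Suc n"] of_nat_cf_coeff_Suc[OF assms, of n] by simp
  have "r' > 0"
    using cf_rem_Suc_gt_1[OF assms, of "Suc n"] r'_def by linarith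
  have "x * (real (conv_denom x (Suc (Suc n))) * r' + real (conv_denom x (Suc n)))
      = r' * (x * (real (conv_denom x (Suc n)) * r + real (conv_denom x n)))"
    using \<open>r' > 0\<close> by (simp add: r c_def field_simps)
  also have "\<dots> = r' * (of_int (conv_num x (Suc n)) * r + of_int (conv_num x n))"
    using Suc r_def by simp
  also have "\<dots> = of_int (conv_num x (Suc (Suc n))) * r' + of_int (conv_num x (Suc n))"
    using \<open>r' > 0\<close> by (simp add: r c_def field_simps)
  finally show ?case
    using r'_def by simp
qed

lemma conv_det:
  "conv_num x (Suc n) * int (conv_denom x n) - conv_num x n * int (conv_denom x (Suc n)) = (-1) ^ Suc n"
  by (induction n) (simp_all add: algebra_simps)

definition conv_err :: "real \<Rightarrow> nat \<Rightarrow> real" where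
  "conv_err x n = real (conv_denom x n) * x - of_int (conv_num x n)"

lemma conv_err_eq:
  assumes "x \<notin> \<rat>"
  shows "conv_err x n = (-1) ^ Suc n * cf_rem x (Suc n)
    / (real (conv_denom x (Suc n)) * cf_rem x (Suc n) + real (conv_denom x n))"
proof -
  define r where "r = cf_rem x (Suc n)"
  define den where "den = real (conv_denom x (Suc n)) * r + real (conv_denom x n)"
  have "1 < r"
    using cf_rem_Suc_gt_1[OF assms] r_def by simp
  then have "0 < real (conv_denom x (Suc n)) * r"
    using conv_denom_Suc_ge_1[OF assms, of n] by simp
  then have "den > 0"
    by (simp add: den_def add_pos_nonneg)
  have det: "real_of_int (conv_num x (Suc n)) * real (conv_denom x n)
      - of_int (conv_num x n) * real (conv_denom x (Suc n)) = (-1) ^ Suc n"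
    using arg_cong[OF conv_det[of x n], of real_of_int] by simp
  have "conv_err x n * den
      = real (conv_denom x n) * (x * den) - of_int (conv_num x n) * den"
    by (simp add: conv_err_def algebra_simps)
  also have "\<dots> = r * (real_of_int (conv_num x (Suc n)) * real (conv_denom x n)
      - of_int (conv_num x n) * real (conv_denom x (Suc n)))"
    using conv_num_denom_cf_rem[OF assms, of n] unfolding den_def r_def
    by (simp add: algebra_simps)
  also have "\<dots> = (-1) ^ Suc n * r"
    using det by simp
  finally have "conv_err x n * den = (-1) ^ Suc n * r" .
  then have "conv_err x n = (-1) ^ Suc n * r / den"
    using \<open>den > 0\<close> by (subst nonzero_eq_divide_eq) auto
  then show ?thesis
    unfolding r_def den_def .
qed

lemma abs_conv_err_ge:
  assumes "x \<notin> \<rat>"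
  shows "1 / (real (conv_denom x (Suc n)) + real (conv_denom x n)) \<le> \<bar>conv_err x n\<bar>"
proof -
  define r where "r = cf_rem x (Suc n)"
  define q0 q1 where "q0 = real (conv_denom x n)" and "q1 = real (conv_denom x (Suc n))"
  have "1 < r" "1 \<le> q1" "0 \<le> q0"
    using cf_rem_Suc_gt_1[OF assms] conv_denom_Suc_ge_1[OF assms] r_def q0_def q1_def by auto
  moreover have "q0 \<le> q0 * r"
    using \<open>1 < r\<close> \<open>0 \<le> q0\<close> mult_left_mono[of 1 r q0] by simp
  moreover have "0 < q1 * r"
    using \<open>1 < r\<close> \<open>1 \<le> q1\<close> by (intro mult_pos_pos) auto
  moreover have "r * (q1 + q0) = q1 * r + q0 * r"
    by (simp add: algebra_simps)
  ultimately have "0 < q1 * r + q0" "q1 * r + q0 \<le> r * (q1 + q0)"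
    by linarith+
  then have "r / (r * (q1 + q0)) \<le> r / (q1 * r + q0)"
    using \<open>1 < r\<close> by (intro divide_left_mono) auto
  moreover have "r / (r * (q1 + q0)) = 1 / (q1 + q0)"
    using \<open>1 < r\<close> by simp
  moreover have "\<bar>conv_err x n\<bar> = r / (q1 * r + q0)"
    using conv_err_eq[OF assms, of n] \<open>1 < r\<close> \<open>0 < q1 * r + q0\<close>
    unfolding r_def q0_def q1_def by (simp add: abs_mult power_abs)
  ultimately show ?thesis
    unfolding q0_def q1_def by simp
qed

lemma conv_err_sign:
  assumes "x \<notin> \<rat>"
  shows "0 < (-1) ^ Suc n * conv_err x n"
proof -
  define r where "r = cf_rem x (Suc n)"
  define den where "den = real (conv_denom x (Suc n)) * r + real (conv_denom x n)"
  have "1 < r"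
    using cf_rem_Suc_gt_1[OF assms] r_def by simp
  then have "0 < den"
    using conv_denom_Suc_ge_1[OF assms, of n] by (simp add: den_def add_pos_nonneg)
  have "(-1) ^ Suc n * conv_err x n = ((-1) ^ Suc n * (-1) ^ Suc n) * r / den"
    using conv_err_eq[OF assms, of n] unfolding r_def den_def by simp
  also have "\<dots> = r / den"
    by (simp flip: power_add)
  finally show ?thesis
    using \<open>1 < r\<close> \<open>0 < den\<close> by simp
qed

lemma conv_err_mult_Suc_neg: "x \<notin> \<rat> \<Longrightarrow> conv_err x n * conv_err x (Suc n) < 0"
proof -
  assume irr: "x \<notin> \<rat>"
  define s :: real where "s = (-1) ^ Suc n"
  have "0 < s * conv_err x n" "0 < - s * conv_err x (Suc n)"
    using conv_err_sign[OF irr, of n] conv_err_sign[OF irr, of "Suc n"] s_def by simp_all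
  then have "0 < (s * conv_err x n) * (- s * conv_err x (Suc n))"
    by (rule mult_pos_pos)
  also have "\<dots> = - (s * s) * (conv_err x n * conv_err x (Suc n))"
    by (simp add: algebra_simps)
  finally show ?thesis
    by (simp add: s_def flip: power_add)
qed

lemma abs_le_abs_add_of_mult_nonneg: "0 \<le> a * b \<Longrightarrow> \<bar>a\<bar> \<le> \<bar>a + b\<bar>" for a b :: real
  by (auto simp: zero_le_mult_iff)

lemma unimodular_coords:
  fixes p0 p1 q0 q1 d p :: int
  assumes "\<bar>p1 * q0 - p0 * q1\<bar> = 1"
  obtains u v where "d = u * q0 + v * q1" and "p = u * p0 + v * p1"
proof
  define s where "s = p1 * q0 - p0 * q1"
  have "s * s = 1"
    using assms s_def by (metis abs_mult_self_eq mult_1)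
  define u v where "u = s * (d * p1 - p * q1)" and "v = s * (p * q0 - d * p0)"
  have "u * q0 + v * q1 = (s * s) * d"
    by (simp add: u_def v_def s_def algebra_simps)
  then show "d = u * q0 + v * q1"
    using \<open>s * s = 1\<close> by simp
  have "u * p0 + v * p1 = (s * s) * p"
    by (simp add: u_def v_def s_def algebra_simps)
  then show "p = u * p0 + v * p1"
    using \<open>s * s = 1\<close> by simp
qed

lemma lincomb_coeffs_nonzero_mult_nonpos:
  fixes d u v q0 q1 :: int
  assumes d: "0 < d" "d < q1" and "0 \<le> q0" and d_eq: "d = u * q0 + v * q1"
  shows "u \<noteq> 0" and "u * v \<le> 0"
proof -
  have "\<not> (0 \<le> u \<and> 1 \<le> v)"
  proof
    assume "0 \<le> u \<and> 1 \<le> v"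
    then have "0 \<le> u * q0" "q1 \<le> v * q1"
      using \<open>0 \<le> q0\<close> d by auto
    then show False
      using d d_eq by linarith
  qed
  moreover have "\<not> (u \<le> 0 \<and> v \<le> 0)"
  proof
    assume "u \<le> 0 \<and> v \<le> 0"
    then have "u * q0 \<le> 0" "v * q1 \<le> 0"
      using \<open>0 \<le> q0\<close> d by (auto simp: mult_nonpos_nonneg)
    then show False
      using d d_eq by linarith
  qed
  ultimately show "u \<noteq> 0" "u * v \<le> 0"
    by (auto simp: mult_nonpos_nonneg mult_nonneg_nonpos)
qed

text \<open>Best approximation: in the basis (q_(n-1), q_n) of the integers, d has coordinates u \<noteq> 0
  and v with u v \<le> 0, while the errors of the two convergents have opposite signs.\<close>

lemma abs_conv_err_le:
  assumes irr: "x \<notin> \<rat>" and d: "0 < d" "d < int (conv_denom x (Suc n))"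
  shows "\<bar>conv_err x n\<bar> \<le> \<bar>of_int d * x - of_int p\<bar>"
proof -
  define q0 q1 p0 p1 where "q0 = int (conv_denom x n)" and "q1 = int (conv_denom x (Suc n))"
    and "p0 = conv_num x n" and "p1 = conv_num x (Suc n)"
  have "\<bar>p1 * q0 - p0 * q1\<bar> = 1"
    using conv_det[of x n] by (simp add: q0_def q1_def p0_def p1_def abs_mult)
  then obtain u v where d_eq: "d = u * q0 + v * q1" and p_eq: "p = u * p0 + v * p1"
    using unimodular_coords by blast
  have "u \<noteq> 0" "u * v \<le> 0"
    using lincomb_coeffs_nonzero_mult_nonpos[OF d(1) _ _ d_eq] d(2) by (simp_all add: q0_def q1_def)
  have err: "of_int d * x - of_int p = of_int u * conv_err x n + of_int v * conv_err x (Suc n)"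
    unfolding d_eq p_eq conv_err_def q0_def q1_def p0_def p1_def by (simp add: algebra_simps)
  have "real_of_int (u * v) \<le> 0"
    using \<open>u * v \<le> 0\<close> by (subst of_int_le_0_iff)
  then have "0 \<le> real_of_int (u * v) * (conv_err x n * conv_err x (Suc n))"
    using conv_err_mult_Suc_neg[OF irr, of n] by (intro mult_nonpos_nonpos) auto
  then have "\<bar>of_int u * conv_err x n\<bar> \<le> \<bar>of_int d * x - of_int p\<bar>"
    unfolding err by (intro abs_le_abs_add_of_mult_nonneg) (simp add: algebra_simps)
  moreover have "\<bar>conv_err x n\<bar> \<le> \<bar>of_int u * conv_err x n\<bar>"
  proof -
    have "1 \<le> \<bar>u\<bar>"
      using \<open>u \<noteq> 0\<close> by linarith
    then have "1 \<le> \<bar>real_of_int u\<bar>"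
      by (metis of_int_1_le_iff of_int_abs)
    then show ?thesis
      using mult_right_mono[of 1 "\<bar>real_of_int u\<bar>" "\<bar>conv_err x n\<bar>"] by (simp add: abs_mult)
  qed
  ultimately show ?thesis
    by linarith
qed

lemma cf_denom_ge_1: "x \<notin> \<rat> \<Longrightarrow> 1 \<le> cf_denom x n"
  using conv_denom_Suc_ge_1 conv_denom_Suc by metis

lemma cf_denom_mono: "x \<notin> \<rat> \<Longrightarrow> m \<le> m' \<Longrightarrow> cf_denom x m \<le> cf_denom x m'"
  using lift_Suc_mono_le[of "cf_denom x"] conv_denom_le_Suc conv_denom_Suc by metis

lemma cf_denom_Suc_Suc_ge_double:
  assumes "x \<notin> \<rat>"
  shows "2 * cf_denom x n \<le> cf_denom x (Suc (Suc n))"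
proof -
  have "1 * cf_denom x (Suc n) \<le> cf_coeff x (Suc (Suc n)) * cf_denom x (Suc n)"
    by (intro mult_le_mono1 cf_coeff_Suc_ge_1[OF assms])
  then show ?thesis
    using cf_denom_mono[OF assms, of n "Suc n"] by (simp only: cf_denom.simps mult_1) linarith
qed

lemma circ_norm_mult_ge:
  assumes irr: "x \<notin> \<rat>" and d: "0 < d" "d < cf_denom x m"
  shows "1 / (2 * real (cf_denom x m)) \<le> circ_norm (real d * x)"
proof -
  have "1 / (2 * real (cf_denom x m)) \<le> 1 / (real (conv_denom x (Suc m)) + real (conv_denom x m))"
    using conv_denom_le_Suc[OF irr, of m] conv_denom_Suc_ge_1[OF irr, of m]
    by (intro divide_left_mono) (auto simp: conv_denom_Suc)
  also have "\<dots> \<le> \<bar>conv_err x m\<bar>"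
    by (rule abs_conv_err_ge[OF irr])
  also have "\<dots> \<le> \<bar>of_int (int d) * x - of_int (round (real d * x))\<bar>"
    using d by (intro abs_conv_err_le[OF irr]) (auto simp: conv_denom_Suc)
  finally show ?thesis
    by (simp add: circ_norm_def)
qed

lemma circ_norm_diff_mult_ge:
  assumes irr: "x \<notin> \<rat>" and "y < cf_denom x m" "z < cf_denom x m" "y \<noteq> z"
  shows "1 / (2 * real (cf_denom x m)) \<le> circ_norm (real y * x - real z * x)"
proof -
  have "1 / (2 * real (cf_denom x m)) \<le> circ_norm (real y * x - real z * x)" if "z < y" "y < cf_denom x m" for y z
    using circ_norm_mult_ge[OF irr, of "y - z" m] that by (simp add: of_nat_diff algebra_simps)
  moreover have "circ_norm (real z * x - real y * x) = circ_norm (real y * x - real z * x)"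
    using circ_norm_minus[of "real y * x - real z * x"] by simp
  ultimately show ?thesis
    using assms by (metis linorder_neqE_nat)
qed

definition orbit_balls_meet :: "real \<Rightarrow> real \<Rightarrow> nat \<Rightarrow> nat \<Rightarrow> bool" where
  "orbit_balls_meet x \<rho> n n' \<longleftrightarrow>
     circ_ball (real n * x) (\<rho> / real n) \<inter> circ_ball (real n' * x) (\<rho> / real n') \<noteq> {}"

lemma symp_orbit_balls_meet: "symp (orbit_balls_meet x \<rho>)"
  by (rule sympI) (auto simp: orbit_balls_meet_def)

lemma circ_norm_le_if_orbit_balls_meet:
  assumes "orbit_balls_meet x \<rho> n n'" "0 \<le> \<rho>"
    and "0 < q" "real q / 2 \<le> real n" "0 < q'" "real q' / 2 \<le> real n'"
  shows "circ_norm (real n' * x - real n * x) \<le> 2 * \<rho> / real q + 2 * \<rho> / real q'"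
proof -
  have radius: "\<rho> / real k \<le> 2 * \<rho> / real p" if "0 < p" "real p / 2 \<le> real k" for k p :: nat
  proof -
    have "2 * \<rho> / (2 * real k) \<le> 2 * \<rho> / real p"
      using that \<open>0 \<le> \<rho>\<close> by (intro divide_left_mono) auto
    then show ?thesis
      by simp
  qed
  have "circ_norm (real n' * x - real n * x) \<le> \<rho> / real n + \<rho> / real n'"
    using assms(1) circ_norm_diff_le_add_radii unfolding orbit_balls_meet_def by blast
  then show ?thesis
    using radius[of q n] radius[of q' n'] assms by linarith
qed

lemma not_orbit_balls_meet_same_level:
  assumes irr: "x \<notin> \<rat>" and \<rho>: "0 \<le> \<rho>" "\<rho> < 1/8"
    and n: "real (cf_denom x m) / 2 \<le> real n" "n < cf_denom x m"
    and n': "real (cf_denom x m) / 2 \<le> real n'" "n' < cf_denom x m"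
    and "n \<noteq> n'"
  shows "\<not> orbit_balls_meet x \<rho> n n'"
proof
  assume meet: "orbit_balls_meet x \<rho> n n'"
  define q where "q = cf_denom x m"
  have "0 < q"
    using cf_denom_ge_1[OF irr] q_def by (simp add: Suc_le_eq)
  have "circ_norm (real n' * x - real n * x) \<le> 2 * \<rho> / real q + 2 * \<rho> / real q"
    using circ_norm_le_if_orbit_balls_meet[OF meet \<rho>(1) \<open>0 < q\<close> _ \<open>0 < q\<close>] n n' q_def by simp
  also have "\<dots> < 1 / (2 * real q)"
    using \<rho> \<open>0 < q\<close> by (simp add: field_simps)
  also have "\<dots> \<le> circ_norm (real n' * x - real n * x)"
    using circ_norm_diff_mult_ge[OF irr n'(2) n(2)] \<open>n \<noteq> n'\<close> q_def by simp
  finally show False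
    by simp
qed

lemma card_orbit_balls_meet_le:
  assumes irr: "x \<notin> \<rat>" and "0 \<le> \<rho>"
    and levels: "2 * cf_denom x m \<le> cf_denom x m'"
    and n: "real (cf_denom x m) / 2 \<le> real n" "n < cf_denom x m"
    and R: "R \<subseteq> {n'. real (cf_denom x m') / 2 \<le> real n' \<and> n' < cf_denom x m'}"
  shows "real (card {n' \<in> R. orbit_balls_meet x \<rho> n n'})
    \<le> 12 * \<rho> * real (cf_denom x m') / real (cf_denom x m)"
    (is "real (card ?R) \<le> _")
proof -
  define q q' where "q = cf_denom x m" and "q' = cf_denom x m'"
  have "0 < q" "2 * real q \<le> real q'"
    using cf_denom_ge_1[OF irr] levels q_def q'_def by (auto simp: Suc_le_eq)
  then have "0 < q'"
    by linarith
  have R': "real q' / 2 \<le> real y" "y < q'" if "y \<in> ?R" for y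
    using R that unfolding q'_def by blast+
  have "?R \<subseteq> {..<q'}"
    using R'(2) by blast
  then have "finite ?R"
    by (rule finite_subset) simp
  have "n \<notin> ?R"
  proof
    assume "n \<in> ?R"
    then have "real q' / 2 \<le> real n"
      by (rule R'(1))
    then show False
      using n(2) \<open>2 * real q \<le> real q'\<close> q_def by simp
  qed
  define N where "N = insert n ?R"
  have "finite N" "card N = card ?R + 1"
    using \<open>finite ?R\<close> \<open>n \<notin> ?R\<close> N_def by simp_all
  have below: "y < q'" if "y \<in> N" for y
    using that R'(2) n(2) \<open>2 * real q \<le> real q'\<close> unfolding N_def q_def by fastforce
  have sep: "1 / (2 * real q') \<le> circ_norm (real y * x - real z * x)"
    if "y \<in> N" "z \<in> N" "y \<noteq> z" for y z
    using circ_norm_diff_mult_ge[OF irr] below that q'_def by simp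
  then have "inj_on (\<lambda>y. real y * x) N"
    using \<open>0 < q'\<close> by (intro inj_onI) (force simp: circ_norm_def)
  have near: "circ_norm (real y * x - real n * x) \<le> 3 * \<rho> / real q" if "y \<in> N" for y
  proof (cases "y = n")
    case False
    then have "y \<in> ?R"
      using that N_def by simp
    then have y: "real q' / 2 \<le> real y" "orbit_balls_meet x \<rho> n y"
      using R'(1) by auto
    have "circ_norm (real y * x - real n * x) \<le> 2 * \<rho> / real q + 2 * \<rho> / real q'"
      using circ_norm_le_if_orbit_balls_meet[OF y(2) \<open>0 \<le> \<rho>\<close> \<open>0 < q\<close> _ \<open>0 < q'\<close> y(1)] n q_def
      by simp
    also have "2 * \<rho> / real q' \<le> \<rho> / real q"
      using \<open>2 * real q \<le> real q'\<close> \<open>0 < q\<close> \<open>0 \<le> \<rho>\<close> by (simp add: field_simps mult_left_mono)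
    finally show ?thesis
      by simp
  qed (use \<open>0 \<le> \<rho>\<close> \<open>0 < q\<close> in \<open>simp add: circ_norm_def\<close>)
  have "real (card ((\<lambda>y. real y * x) ` N)) * (1 / (2 * real q')) \<le> 2 * (3 * \<rho> / real q) + 1 / (2 * real q')"
    using \<open>finite N\<close> near sep \<open>0 < q'\<close> N_def
    by (intro card_mult_le_of_circ_separated[where c = "real n * x"]) auto
  then have "real (card ?R) / (2 * real q') \<le> 6 * \<rho> / real q"
    using card_image[OF \<open>inj_on (\<lambda>y. real y * x) N\<close>] \<open>card N = card ?R + 1\<close>
    by (simp add: algebra_simps add_divide_distrib)
  then show ?thesis
    using \<open>0 < q\<close> \<open>0 < q'\<close> unfolding q_def q'_def by (simp add: field_simps)
qed

lemma greedy_thinning: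
  fixes conf :: "'a \<Rightarrow> 'a \<Rightarrow> bool" and S :: "nat \<Rightarrow> 'a set"
  assumes "symp conf" and finite: "\<And>i. finite (S i)"
    and within: "\<And>i y z. y \<in> S i \<Longrightarrow> z \<in> S i \<Longrightarrow> y \<noteq> z \<Longrightarrow> \<not> conf y z"
  obtains D where "\<And>i. D i \<subseteq> S i"
    and "\<And>y z. y \<in> (\<Union>i. D i) \<Longrightarrow> z \<in> (\<Union>i. D i) \<Longrightarrow> y \<noteq> z \<Longrightarrow> \<not> conf y z"
    and "\<And>i. card (S i) \<le> card (D i) + (\<Sum>i0<i. \<Sum>y\<in>S i0. card {z \<in> S i. conf y z})"
proof
  define U where "U i = (\<Union>i0<i. \<Union>y\<in>S i0. {z \<in> S i. conf y z})" for i
  define D where "D i = S i - U i" for i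
  show "D i \<subseteq> S i" for i
    by (auto simp: D_def)
  have later: "\<not> conf y z" if "y \<in> D i" "z \<in> D i'" "i < i'" for y z i i'
    using that by (auto simp: D_def U_def)
  show "\<not> conf y z" if y: "y \<in> (\<Union>i. D i)" and z: "z \<in> (\<Union>i. D i)" and "y \<noteq> z" for y z
  proof -
    obtain i i' where "y \<in> D i" "z \<in> D i'"
      using y z by blast
    consider "i = i'" | "i < i'" | "i' < i"
      by linarith
    then show ?thesis
    proof cases
      case 1
      then show ?thesis
        using within[of y i z] \<open>y \<in> D i\<close> \<open>z \<in> D i'\<close> \<open>y \<noteq> z\<close> by (auto simp: D_def)
    next
      case 2
      then show ?thesis
        using later \<open>y \<in> D i\<close> \<open>z \<in> D i'\<close> by blast
    next
      case 3
      then show ?thesis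
        using later[of z i' y i] \<open>y \<in> D i\<close> \<open>z \<in> D i'\<close> sympD[OF \<open>symp conf\<close>, of y z] by blast
    qed
  qed
  show "card (S i) \<le> card (D i) + (\<Sum>i0<i. \<Sum>y\<in>S i0. card {z \<in> S i. conf y z})" for i
  proof -
    have "S i = D i \<union> U i"
      by (auto simp: D_def U_def)
    then have "card (S i) \<le> card (D i) + card (U i)"
      by (metis card_Un_le)
    also have "card (U i) \<le> (\<Sum>i0<i. card (\<Union>y\<in>S i0. {z \<in> S i. conf y z}))"
      unfolding U_def by (rule card_UN_le) simp
    also have "\<dots> \<le> (\<Sum>i0<i. \<Sum>y\<in>S i0. card {z \<in> S i. conf y z})"
      by (intro sum_mono card_UN_le finite)
    finally show ?thesis
      by simp
  qed
qed

lemma orbit_levels_thinning: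
  fixes x \<rho> \<mu> :: real and m :: "nat \<Rightarrow> nat" and S :: "nat \<Rightarrow> nat set" and j :: nat
  assumes irr: "x \<notin> \<rat>" and \<rho>: "0 \<le> \<rho>" "\<rho> < 1/8" "192 * real j * \<rho> \<le> 1"
    and levels: "\<And>i0 i. i0 < i \<Longrightarrow> 2 * cf_denom x (m i0) \<le> cf_denom x (m i)"
    and S: "\<And>i. S i \<subseteq> {n. real (cf_denom x (m i)) / 2 \<le> real n \<and> n < cf_denom x (m i)}"
    and card_S: "\<And>i. \<mu> * real (cf_denom x (m i)) / 8 \<le> real (card (S i))"
      "\<And>i. real (card (S i)) \<le> \<mu> * real (cf_denom x (m i))"
  obtains D where "\<And>i. D i \<subseteq> S i"
    and "\<And>n n'. n \<in> (\<Union>i. D i) \<Longrightarrow> n' \<in> (\<Union>i. D i) \<Longrightarrow> n \<noteq> n' \<Longrightarrow> \<not> orbit_balls_meet x \<rho> n n'"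
    and "\<And>i. i < j \<Longrightarrow> real (card (S i)) / 2 \<le> real (card (D i))"
proof -
  define q where "q i = real (cf_denom x (m i))" for i
  have q_pos: "0 < q i" for i
    using cf_denom_ge_1[OF irr] q_def by (simp add: Suc_le_eq)
  then have q_nonzero: "q i \<noteq> 0" for i
    by (metis less_irrefl)
  have conflicts: "real (card {n' \<in> S i. orbit_balls_meet x \<rho> n n'}) \<le> 12 * \<rho> * q i / q i0"
    if "i0 < i" "n \<in> S i0" for i0 i n
    using card_orbit_balls_meet_le[OF irr \<rho>(1) levels[OF \<open>i0 < i\<close>] _ _ S[of i]] S[of i0] that
    unfolding q_def by blast
  show ?thesis
  proof (rule greedy_thinning[of "orbit_balls_meet x \<rho>" S])
    show "symp (orbit_balls_meet x \<rho>)"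
      by (rule symp_orbit_balls_meet)
    show "finite (S i)" for i
      using S[of i] by (rule finite_subset) auto
    show "\<not> orbit_balls_meet x \<rho> y z" if "y \<in> S i" "z \<in> S i" "y \<noteq> z" for i y z
      using not_orbit_balls_meet_same_level[OF irr \<rho>(1,2)] S[of i] that by blast
    fix D
    assume D: "\<And>i. D i \<subseteq> S i"
      "\<And>n n'. n \<in> (\<Union>i. D i) \<Longrightarrow> n' \<in> (\<Union>i. D i) \<Longrightarrow> n \<noteq> n' \<Longrightarrow> \<not> orbit_balls_meet x \<rho> n n'"
      and card_D: "\<And>i. card (S i) \<le> card (D i) +
        (\<Sum>i0<i. \<Sum>n\<in>S i0. card {n' \<in> S i. orbit_balls_meet x \<rho> n n'})"
    show thesis
    proof (rule that[OF D])
      fix i assume "i < j"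
      have "0 \<le> \<mu> * q i"
        using card_S(2)[of i] unfolding q_def by (meson of_nat_0_le_iff order_trans)
      have "real (\<Sum>i0<i. \<Sum>n\<in>S i0. card {n' \<in> S i. orbit_balls_meet x \<rho> n n'})
          \<le> (\<Sum>i0<i. real (card (S i0)) * (12 * \<rho> * q i / q i0))"
        unfolding of_nat_sum using conflicts by (intro sum_mono sum_bounded_above) auto
      also have "\<dots> \<le> (\<Sum>i0<i. \<mu> * q i0 * (12 * \<rho> * q i / q i0))"
        using card_S(2) q_pos \<rho>(1) unfolding q_def
        by (intro sum_mono mult_right_mono) auto
      also have "\<dots> = real i * (12 * \<rho> * (\<mu> * q i))"
        by (simp add: q_nonzero)
      also have "\<dots> \<le> real j * (12 * \<rho> * (\<mu> * q i))"
        using \<open>i < j\<close> \<rho>(1) \<open>0 \<le> \<mu> * q i\<close> by (intro mult_right_mono) auto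
      also have "\<dots> = (192 * real j * \<rho>) * (\<mu> * q i) / 16"
        by simp
      also have "\<dots> \<le> \<mu> * q i / 16"
        using mult_right_mono[OF \<rho>(3) \<open>0 \<le> \<mu> * q i\<close>] by (simp only: mult_1)
      finally show "real (card (S i)) / 2 \<le> real (card (D i))"
        using card_D[of i] card_S(1)[of i] unfolding q_def by linarith
    qed
  qed
qed

theorem proposition3p6:
  fixes \<alpha> \<delta>\<^sub>1 c \<delta> \<delta>' a :: real
    and A :: "real set"
    and Dt :: "nat \<Rightarrow> nat set"
    and j :: nat
  assumes irr: "\<alpha> \<notin> \<rat>"
    and d1: "\<delta>\<^sub>1 > 0"
    and c: "0 < c" "c < (1/24)^2 * (1 - exp (- \<delta>\<^sub>1))"
    and dd: "\<delta> \<ge> \<delta>'" "\<delta>' \<ge> \<delta>\<^sub>1"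
    and A: "circ_interval A \<or>
      (\<exists>(L::nat) (l::nat). l \<ge> 1 \<and> real (cf_denom \<alpha> l) / 2 \<le> real L \<and> L < cf_denom \<alpha> l \<and>
         A = circ_ball (real L * \<alpha>) (exp (- real L * \<delta>'))
             - circ_ball (real L * \<alpha>) (c * exp (- real L * \<delta>')))"
    and Dt: "\<exists>M. \<forall>m\<ge>M.
        Dt m \<subseteq> {n. real (cf_denom \<alpha> m) / 2 \<le> real n \<and> n < cf_denom \<alpha> m \<and> real n * \<alpha> \<in> A} \<and>
        circ_measure A * real (cf_denom \<alpha> m) / 8 \<le> real (card (Dt m)) \<and>
        real (card (Dt m)) \<le> circ_measure A * real (cf_denom \<alpha> m)"
    and a: "0 < a" "a < min (2 powr -10) (2 powr -10 * \<delta>)"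
    and j: "j \<ge> 1" "1/2 \<le> real j * 2^9 * a / \<delta>" "real j * 2^9 * a / \<delta> \<le> 1"
  shows "\<exists>K. \<forall>k\<ge>K. \<exists>D :: nat \<Rightarrow> nat set.
     (\<forall>i<j. D i \<subseteq> Dt (k + 2*i)) \<and>
     (\<forall>n\<in>(\<Union>i<j. D i). \<forall>n'\<in>(\<Union>i<j. D i). n \<noteq> n' \<longrightarrow>
        circ_ball (real n * \<alpha>) (a / (\<delta> * real n)) \<inter>
        circ_ball (real n' * \<alpha>) (a / (\<delta> * real n')) = {}) \<and>
     (\<forall>i<j. real (card (D i)) \<ge> real (card (Dt (k + 2*i))) / 2 \<and>
            real (card (Dt (k + 2*i))) / 2 \<ge> circ_measure A * real (cf_denom \<alpha> (k + 2*i)) / 16)"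
proof -
  have "0 < \<delta>"
    using d1 dd by linarith
  define \<rho> where "\<rho> = a / \<delta>"
  have "(2::real) powr -10 = 1 / 1024"
    by (simp add: powr_minus powr_realpow)
  then have "a < \<delta> / 1024"
    using a(2) by (simp only: min_less_iff_conj) simp
  then have \<rho>: "0 \<le> \<rho>" "\<rho> < 1/8" "192 * real j * \<rho> \<le> 1"
    using a(1) j(3) \<open>0 < \<delta>\<close> by (auto simp: \<rho>_def field_simps)
  obtain M where M: "\<And>m. M \<le> m \<Longrightarrow>
        Dt m \<subseteq> {n. real (cf_denom \<alpha> m) / 2 \<le> real n \<and> n < cf_denom \<alpha> m \<and> real n * \<alpha> \<in> A} \<and>
        circ_measure A * real (cf_denom \<alpha> m) / 8 \<le> real (card (Dt m)) \<and>
        real (card (Dt m)) \<le> circ_measure A * real (cf_denom \<alpha> m)"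
    using Dt by blast
  have levels: "2 * cf_denom \<alpha> (k + 2 * i0) \<le> cf_denom \<alpha> (k + 2 * i)" if "i0 < i" for k i0 i
    using cf_denom_Suc_Suc_ge_double[OF irr, of "k + 2 * i0"] cf_denom_mono[OF irr, of "k + 2 * i0 + 2" "k + 2 * i"]
      that by simp
  have "\<exists>D. (\<forall>i<j. D i \<subseteq> Dt (k + 2*i)) \<and>
     (\<forall>n\<in>(\<Union>i<j. D i). \<forall>n'\<in>(\<Union>i<j. D i). n \<noteq> n' \<longrightarrow>
        circ_ball (real n * \<alpha>) (a / (\<delta> * real n)) \<inter> circ_ball (real n' * \<alpha>) (a / (\<delta> * real n')) = {}) \<and>
     (\<forall>i<j. real (card (D i)) \<ge> real (card (Dt (k + 2*i))) / 2 \<and>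
            real (card (Dt (k + 2*i))) / 2 \<ge> circ_measure A * real (cf_denom \<alpha> (k + 2*i)) / 16)"
    if "M \<le> k" for k
  proof -
    have level_Dt: "Dt (k + 2 * i) \<subseteq> {n. real (cf_denom \<alpha> (k + 2 * i)) / 2 \<le> real n \<and> n < cf_denom \<alpha> (k + 2 * i)}"
      and card_Dt: "circ_measure A * real (cf_denom \<alpha> (k + 2 * i)) / 8 \<le> real (card (Dt (k + 2 * i)))"
        "real (card (Dt (k + 2 * i))) \<le> circ_measure A * real (cf_denom \<alpha> (k + 2 * i))" for i
      using M[of "k + 2 * i"] that by auto
    obtain D where D: "\<And>i. D i \<subseteq> Dt (k + 2 * i)"
      "\<And>n n'. n \<in> (\<Union>i. D i) \<Longrightarrow> n' \<in> (\<Union>i. D i) \<Longrightarrow> n \<noteq> n' \<Longrightarrow> \<not> orbit_balls_meet \<alpha> \<rho> n n'"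
      "\<And>i. i < j \<Longrightarrow> real (card (Dt (k + 2 * i))) / 2 \<le> real (card (D i))"
      using orbit_levels_thinning[where m = "\<lambda>i. k + 2 * i" and S = "\<lambda>i. Dt (k + 2 * i)",
          OF irr \<rho> levels level_Dt card_Dt] by metis
    show ?thesis
    proof (intro exI[of _ D] conjI ballI allI impI)
      fix n n' assume "n \<in> (\<Union>i<j. D i)" "n' \<in> (\<Union>i<j. D i)" "n \<noteq> n'"
      then show "circ_ball (real n * \<alpha>) (a / (\<delta> * real n)) \<inter>
          circ_ball (real n' * \<alpha>) (a / (\<delta> * real n')) = {}"
        using D(2)[of n n'] by (auto simp: orbit_balls_meet_def \<rho>_def)
    qed (use D(1,3) card_Dt in auto)
  qed
  then show ?thesis
    by blast
qed

end
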